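(* Consider a FIFO system in which packets, numbered $1,2,\dots$ in order of arrival, with sizes $l_k$, arrive at times $A_1\le A_2\le\cdots$ and packet $n$ starts its service at time $Q_n$, service being non-preemptive and in order. If the system offers a service curve $\beta$, then for each packet $n$ there exists $m\le n$ such that $$\beta(Q_n-A_m)\le\sum_{k=m}^{n-1}l_k.$$
   Context: $N(t)$ denotes the number of bits that have arrived up to time $t$ and $O(t)$ the number of bits served up to time $t$ (so that just after $Q_n$ the output equals $l_1+\dots+l_{n-1}$). A function $\beta:[0,\infty)\to[0,\infty)$, wide-sense increasing, is a service curve for the system if for every $t$ there exists $s\le t$ with $O(t)\ge N(s)+\beta(t-s)$. An empty sum equals $0$. *)

theory Defs
  imports Complex_Main
begin

definition arrivals :: "(nat \<Rightarrow> real) \<Rightarrow> (nat \<Rightarrow> real) \<Rightarrow> real \<Rightarrow> real" where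
  "arrivals A l t = (\<Sum>k\<in>{k. 1 \<le> k \<and> A k \<le> t}. l k)"

definition service_curve :: "(real \<Rightarrow> real) \<Rightarrow> (real \<Rightarrow> real) \<Rightarrow> (real \<Rightarrow> real) \<Rightarrow> bool" where
  "service_curve N Out \<beta> \<longleftrightarrow>
     (\<forall>t\<ge>0. \<exists>s. 0 \<le> s \<and> s \<le> t \<and> Out t \<ge> N s + \<beta> (t - s))"

end

theory Submission
  imports Defs
begin

text \<open>Apply the service curve at t = Q n to get a time s \<le> Q n with
  Out (Q n) \<ge> N s + \<beta>(Q n - s). Packet n cannot have arrived by s, since then the bits of
  packets 1..n would already exceed Out (Q n) = l 1 + ... + l (n-1). So take m to be the first
  packet arriving after s: packets 1..m-1 are in N s, hence
  \<beta>(Q n - A m) \<le> \<beta>(Q n - s) \<le> Out (Q n) - N s \<le> l m + ... + l (n-1).\<close>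

lemma sum_le_arrivals:
  fixes A l :: "nat \<Rightarrow> real"
  assumes "finite {k. 1 \<le> k \<and> A k \<le> s}"
    and "\<And>k. 1 \<le> k \<Longrightarrow> 0 \<le> l k"
    and "\<And>k. k \<in> K \<Longrightarrow> 1 \<le> k \<and> A k \<le> s"
  shows "sum l K \<le> arrivals A l s"
  unfolding arrivals_def using assms by (intro sum_mono2) auto

lemma obtain_least_index:
  fixes n :: nat
  assumes "1 \<le> n" and "P n"
  obtains m where "1 \<le> m" and "m \<le> n" and "P m" and "\<And>k. 1 \<le> k \<Longrightarrow> k < m \<Longrightarrow> \<not> P k"
proof
  let ?m = "LEAST k. 1 \<le> k \<and> P k"
  have "1 \<le> ?m \<and> P ?m" by (rule LeastI[of _ n]) (use assms in auto)
  then show "1 \<le> ?m" and "P ?m" by auto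
  show "?m \<le> n" by (rule Least_le) (use assms in auto)
  show "\<not> P k" if "1 \<le> k" and "k < ?m" for k
    using not_less_Least[OF \<open>k < ?m\<close>] \<open>1 \<le> k\<close> by blast
qed

theorem lemma2:
  fixes A Q l :: "nat \<Rightarrow> real" and Out \<beta> :: "real \<Rightarrow> real" and n :: nat
  assumes A_nonneg: "\<And>k. 1 \<le> k \<Longrightarrow> 0 \<le> A k"
    and A_mono: "\<And>j k. 1 \<le> j \<Longrightarrow> j \<le> k \<Longrightarrow> A j \<le> A k"
    and l_pos: "\<And>k. 1 \<le> k \<Longrightarrow> 0 < l k"
    and finite_arr: "\<And>t. finite {k. 1 \<le> k \<and> A k \<le> t}"
    and Q_after_A: "\<And>k. 1 \<le> k \<Longrightarrow> A k \<le> Q k"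
    and Q_mono: "\<And>j k. 1 \<le> j \<Longrightarrow> j \<le> k \<Longrightarrow> Q j \<le> Q k"
    and O_mono: "mono Out"
    and O_at_Q: "\<And>k. 1 \<le> k \<Longrightarrow> Out (Q k) = (\<Sum>i=1..<k. l i)"
    and beta_mono: "mono_on {0..} \<beta>"
    and beta_nonneg: "\<And>x. 0 \<le> x \<Longrightarrow> 0 \<le> \<beta> x"
    and sc: "service_curve (arrivals A l) Out \<beta>"
    and n: "1 \<le> n"
  shows "\<exists>m. 1 \<le> m \<and> m \<le> n \<and> \<beta> (Q n - A m) \<le> (\<Sum>k=m..<n. l k)"
proof -
  have l_nonneg: "\<And>k. 1 \<le> k \<Longrightarrow> 0 \<le> l k" using l_pos less_imp_le by blast
  have "0 \<le> Q n" using A_nonneg[OF n] Q_after_A[OF n] by linarith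
  then obtain s where "s \<le> Q n" and served: "arrivals A l s + \<beta> (Q n - s) \<le> (\<Sum>i=1..<n. l i)"
    using sc O_at_Q[OF n] unfolding service_curve_def by auto
  have "s < A n"
  proof (rule ccontr)
    assume "\<not> s < A n"
    then have "A k \<le> s" if "k \<in> {1..n}" for k
      using A_mono[of k n] that by auto
    then have "(\<Sum>i=1..n. l i) \<le> arrivals A l s"
      by (intro sum_le_arrivals finite_arr l_nonneg) auto
    moreover have "(\<Sum>i=1..n. l i) = (\<Sum>i=1..<n. l i) + l n"
      using n by (simp add: atLeastLessThanSuc_atLeastAtMost[symmetric])
    ultimately show False
      using served beta_nonneg[of "Q n - s"] \<open>s \<le> Q n\<close> l_pos[OF n] by linarith
  qed
  then obtain m where m: "1 \<le> m" "m \<le> n" "s < A m"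
    and before: "\<And>k. 1 \<le> k \<Longrightarrow> k < m \<Longrightarrow> \<not> s < A k"
    using obtain_least_index[of n "\<lambda>k. s < A k"] n by blast
  have "(\<Sum>i=1..<m. l i) \<le> arrivals A l s"
    using before by (intro sum_le_arrivals finite_arr l_nonneg) (auto simp: not_less)
  moreover have "(\<Sum>i=1..<n. l i) = (\<Sum>i=1..<m. l i) + (\<Sum>i=m..<n. l i)"
    using m by (simp add: sum.atLeastLessThan_concat)
  moreover have "\<beta> (Q n - A m) \<le> \<beta> (Q n - s)"
    using A_mono[OF m(1,2)] Q_after_A[OF n] \<open>s \<le> Q n\<close> \<open>s < A m\<close>
    by (intro mono_onD[OF beta_mono]) auto
  ultimately show ?thesis using served m by (intro exI[of _ m]) linarith
qed

end
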